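(* Let $\mathcal{X}$ be any fuzzy random variable with values in $\mathcal{F}_c(\mathbb{R})$. Then $\mathrm{Med}_s(\mathcal{X})=\mathrm{Med}(\mathcal{X};D_{FT})$.
   Context: $\mathcal{F}_c(\mathbb{R})$ is the set of functions $A:\mathbb{R}\to[0,1]$ whose $\alpha$-levels $A_\alpha=\{x:A(x)\ge\alpha\}$ ($\alpha\in(0,1]$) and $A_0=\overline{\{x:A(x)>0\}}$ are non-empty compact intervals. Support function: $s_A(u,\alpha)=\sup\{uv:v\in A_\alpha\}$, $u\in\{-1,1\}$, $\alpha\in[0,1]$. A fuzzy random variable on $(\Omega,\mathcal{A},\mathbb{P})$ is a map $\mathcal{X}:\Omega\to\mathcal{F}_c(\mathbb{R})$ with each $\omega\mapsto\mathcal{X}(\omega)_\alpha$ a random compact set; $s_{\mathcal{X}}(u,\alpha)(\omega)=s_{\mathcal{X}(\omega)}(u,\alpha)$ is then a real random variable. For a real random variable $X$, $\mathrm{Med}(X)$ is the set of all its medians. $\mathrm{Med}_s(\mathcal{X})$ is the set of $A\in\mathcal{F}_c(\mathbb{R})$ with $s_A(u,\alpha)\in\mathrm{Med}(s_{\mathcal{X}}(u,\alpha))$ for all $u\in\{-1,1\}$, $\alpha\in[0,1]$. The fuzzy Tukey depth is $D_{FT}(A;\mathcal{X})=\inf_{u\in\{-1,1\},\alpha\in[0,1]}\min\big(\mathbb{P}[s_{\mathcal{X}}(u,\alpha)\le s_A(u,\alpha)],\ \mathbb{P}[s_{\mathcal{X}}(u,\alpha)\ge s_A(u,\alpha)]\big)$,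 and $\mathrm{Med}(\mathcal{X};D_{FT})=\{A\in\mathcal{F}_c(\mathbb{R}):D_{FT}(A;\mathcal{X})=\max_{U\in\mathcal{F}_c(\mathbb{R})}D_{FT}(U;\mathcal{X})\}$. *)

theory Defs
  imports "HOL-Probability.Probability"
begin

definition alpha_level :: "(real \<Rightarrow> real) \<Rightarrow> real \<Rightarrow> real set" where
  "alpha_level A \<alpha> =
     (if \<alpha> = 0 then closure {x. A x > 0} else {x. A x \<ge> \<alpha>})"

definition Fc :: "(real \<Rightarrow> real) set" where
  "Fc = {A. (\<forall>x. 0 \<le> A x \<and> A x \<le> 1) \<and>
            (\<forall>\<alpha>\<in>{0..1}. \<exists>a b. a \<le> b \<and> alpha_level A \<alpha> = {a..b})}"

definition supp_fun :: "(real \<Rightarrow> real) \<Rightarrow> real \<Rightarrow> real \<Rightarrow> real" where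
  "supp_fun A u \<alpha> = Sup ((\<lambda>v. u * v) ` alpha_level A \<alpha>)"

definition random_compact_set :: "'a measure \<Rightarrow> ('a \<Rightarrow> real set) \<Rightarrow> bool" where
  "random_compact_set M K \<longleftrightarrow>
     (\<forall>\<omega>\<in>space M. compact (K \<omega>) \<and> K \<omega> \<noteq> {}) \<and>
     (\<forall>G. open G \<longrightarrow> {\<omega>\<in>space M. K \<omega> \<inter> G \<noteq> {}} \<in> sets M)"

definition fuzzy_random_variable :: "'a measure \<Rightarrow> ('a \<Rightarrow> real \<Rightarrow> real) \<Rightarrow> bool" where
  "fuzzy_random_variable M X \<longleftrightarrow>
     (\<forall>\<omega>\<in>space M. X \<omega> \<in> Fc) \<and>
     (\<forall>\<alpha>\<in>{0..1}. random_compact_set M (\<lambda>\<omega>. alpha_level (X \<omega>) \<alpha>))"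

definition Med :: "'a measure \<Rightarrow> ('a \<Rightarrow> real) \<Rightarrow> real set" where
  "Med M Y = {m. measure M {\<omega>\<in>space M. Y \<omega> \<le> m} \<ge> 1/2 \<and>
                 measure M {\<omega>\<in>space M. Y \<omega> \<ge> m} \<ge> 1/2}"

definition Med_s :: "'a measure \<Rightarrow> ('a \<Rightarrow> real \<Rightarrow> real) \<Rightarrow> (real \<Rightarrow> real) set" where
  "Med_s M X = {A\<in>Fc. \<forall>u\<in>{-1,1}. \<forall>\<alpha>\<in>{0..1}.
                   supp_fun A u \<alpha> \<in> Med M (\<lambda>\<omega>. supp_fun (X \<omega>) u \<alpha>)}"

definition D_FT :: "'a measure \<Rightarrow> ('a \<Rightarrow> real \<Rightarrow> real) \<Rightarrow> (real \<Rightarrow> real) \<Rightarrow> real" where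
  "D_FT M X A = (INF p\<in>{-1,1::real} \<times> {0..1::real}.
      min (measure M {\<omega>\<in>space M. supp_fun (X \<omega>) (fst p) (snd p) \<le> supp_fun A (fst p) (snd p)})
          (measure M {\<omega>\<in>space M. supp_fun (X \<omega>) (fst p) (snd p) \<ge> supp_fun A (fst p) (snd p)}))"

definition Med_DFT :: "'a measure \<Rightarrow> ('a \<Rightarrow> real \<Rightarrow> real) \<Rightarrow> (real \<Rightarrow> real) set" where
  "Med_DFT M X = {A\<in>Fc. \<forall>U\<in>Fc. D_FT M X U \<le> D_FT M X A}"

end

theory Submission
  imports Defs
begin

(* A set A in F_c has fuzzy Tukey depth at least 1/2 exactly when every s_A(u,alpha) is a median
   of s_X(u,alpha), i.e. when A lies in Med_s(X).  Med_s(X) is not empty: the lower median of the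
   left endpoints inf X_alpha and the upper median of the right endpoints sup X_alpha are monotone
   and left-continuous in alpha, since the endpoints are and continuity of the probability
   measure carries this over to the medians; at alpha = 0 the limits of these medians are again
   medians.  Hence they are the alpha-levels of a fuzzy set in F_c, the maximal depth is at least
   1/2, and every deepest set lies in Med_s(X).  Conversely, if some U has depth above 1/2, each
   s_U(u,alpha) has probability above 1/2 on both sides and is therefore the only median, so every
   element of Med_s(X) has the support function of U, hence the same depth. *)

section \<open>Lower medians\<close>

definition lower_median :: "'a measure \<Rightarrow> ('a \<Rightarrow> real) \<Rightarrow> real" where
  "lower_median M Y = Inf {m. 1/2 \<le> measure M {\<omega>\<in>space M. Y \<omega> \<le> m}}"

lemma Med_uminus: "- m \<in> Med M (\<lambda>\<omega>. - Y \<omega>) \<longleftrightarrow> m \<in> Med M Y"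
  unfolding Med_def by auto

context prob_space
begin

lemma prob_INT_decseq_ge:
  assumes "\<And>n. E n \<in> events" "decseq E" "\<And>n. c \<le> prob (E n)"
  shows "c \<le> prob (\<Inter>n. E n)"
proof (rule LIMSEQ_le_const)
  show "(\<lambda>n. prob (E n)) \<longlonglongrightarrow> prob (\<Inter>n. E n)"
    using assms by (intro finite_Lim_measure_decseq) auto
qed (use assms in auto)

context
  fixes Y :: "'a \<Rightarrow> real"
  assumes Y[measurable]: "Y \<in> borel_measurable M"
begin

lemma cdf_distr: "cdf (distr M borel Y) m = prob {\<omega>\<in>space M. Y \<omega> \<le> m}"
  unfolding cdf_def by (subst measure_distr) (auto intro!: arg_cong[where f=prob])

lemma measure_distr_lessThan: "measure (distr M borel Y) {..<m} = prob {\<omega>\<in>space M. Y \<omega> < m}"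
  by (subst measure_distr) (auto intro!: arg_cong[where f=prob])

lemma ex_half_le_prob_le: "\<exists>m. 1/2 \<le> prob {\<omega>\<in>space M. Y \<omega> \<le> m}"
proof -
  interpret D: real_distribution "distr M borel Y" by simp
  have "\<forall>\<^sub>F m in at_top. 1/2 < cdf (distr M borel Y) m"
    using D.cdf_lim_at_top_prob by (rule order_tendstoD) simp
  then obtain m where "1/2 < cdf (distr M borel Y) m"
    using eventually_happens'[OF trivial_limit_at_top_linorder] by blast
  then show ?thesis by (auto simp: cdf_distr intro: less_imp_le)
qed

lemma bdd_below_half_le_prob_le: "bdd_below {m. 1/2 \<le> prob {\<omega>\<in>space M. Y \<omega> \<le> m}}"
proof -
  interpret D: real_distribution "distr M borel Y" by simp
  have "\<forall>\<^sub>F m in at_bot. cdf (distr M borel Y) m < 1/2"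
    using D.cdf_lim_at_bot by (rule order_tendstoD) simp
  then obtain b where "\<And>m. m \<le> b \<Longrightarrow> prob {\<omega>\<in>space M. Y \<omega> \<le> m} < 1/2"
    by (auto simp: eventually_at_bot_linorder cdf_distr)
  then show ?thesis
    by (intro bdd_belowI[of _ b]) (meson linorder_not_le mem_Collect_eq not_less_iff_gr_or_eq)
qed

lemma lower_median_le: "1/2 \<le> prob {\<omega>\<in>space M. Y \<omega> \<le> m} \<Longrightarrow> lower_median M Y \<le> m"
  unfolding lower_median_def by (rule cInf_lower[OF _ bdd_below_half_le_prob_le]) simp

lemma le_lower_median:
  "(\<And>m. 1/2 \<le> prob {\<omega>\<in>space M. Y \<omega> \<le> m} \<Longrightarrow> c \<le> m) \<Longrightarrow> c \<le> lower_median M Y"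
  unfolding lower_median_def using ex_half_le_prob_le by (intro cInf_greatest) auto

lemma lower_median_in_Med: "lower_median M Y \<in> Med M Y"
proof -
  interpret D: real_distribution "distr M borel Y" by simp
  define l where "l = lower_median M Y"
  have "1/2 \<le> cdf (distr M borel Y) x" if "l < x" for x
  proof -
    obtain m where "1/2 \<le> prob {\<omega>\<in>space M. Y \<omega> \<le> m}" "m < x"
      using \<open>l < x\<close> cInf_less_iff[OF _ bdd_below_half_le_prob_le] ex_half_le_prob_le
      unfolding l_def lower_median_def by auto
    with D.cdf_nondecreasing[of m x] show ?thesis by (simp add: cdf_distr)
  qed
  then have half_le: "1/2 \<le> prob {\<omega>\<in>space M. Y \<omega> \<le> l}"
    using D.cdf_is_right_cont[of l] unfolding continuous_within cdf_distr[symmetric]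
    by (intro tendsto_lowerbound) (auto simp: eventually_at_filter)
  have "cdf (distr M borel Y) x \<le> 1/2" if "x < l" for x
    using lower_median_le[of x] that unfolding l_def by (force simp: cdf_distr)
  then have "prob {\<omega>\<in>space M. Y \<omega> < l} \<le> 1/2"
    using D.cdf_at_left[of l] unfolding measure_distr_lessThan
    by (intro tendsto_upperbound) (auto simp: eventually_at_filter)
  moreover have "{\<omega>\<in>space M. l \<le> Y \<omega>} = space M - {\<omega>\<in>space M. Y \<omega> < l}"
    by auto
  ultimately have "1/2 \<le> prob {\<omega>\<in>space M. l \<le> Y \<omega>}"
    by (simp add: prob_compl)
  with half_le show ?thesis
    unfolding Med_def l_def by simp
qed

lemma lower_median_le_iff: "lower_median M Y \<le> c \<longleftrightarrow> 1/2 \<le> prob {\<omega>\<in>space M. Y \<omega> \<le> c}"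
proof
  assume "lower_median M Y \<le> c"
  then have "prob {\<omega>\<in>space M. Y \<omega> \<le> lower_median M Y} \<le> prob {\<omega>\<in>space M. Y \<omega> \<le> c}"
    by (intro finite_measure_mono) auto
  with lower_median_in_Med show "1/2 \<le> prob {\<omega>\<in>space M. Y \<omega> \<le> c}"
    unfolding Med_def by simp
qed (rule lower_median_le)

lemma half_le_prob_ge_if_le_lower_median:
  assumes "c \<le> lower_median M Y"
  shows "1/2 \<le> prob {\<omega>\<in>space M. c \<le> Y \<omega>}"
proof -
  have "prob {\<omega>\<in>space M. lower_median M Y \<le> Y \<omega>} \<le> prob {\<omega>\<in>space M. c \<le> Y \<omega>}"
    using assms by (intro finite_measure_mono) auto
  with lower_median_in_Med show ?thesis
    unfolding Med_def by simp
qed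

end

lemma lower_median_mono:
  assumes Y[measurable]: "Y \<in> borel_measurable M" and Z: "Z \<in> borel_measurable M"
    and le: "\<And>\<omega>. \<omega> \<in> space M \<Longrightarrow> Y \<omega> \<le> Z \<omega>"
  shows "lower_median M Y \<le> lower_median M Z"
proof (rule le_lower_median[OF Z])
  fix m assume "1/2 \<le> prob {\<omega>\<in>space M. Z \<omega> \<le> m}"
  moreover have "prob {\<omega>\<in>space M. Z \<omega> \<le> m} \<le> prob {\<omega>\<in>space M. Y \<omega> \<le> m}"
    using le by (intro finite_measure_mono) (auto intro: order_trans)
  ultimately show "lower_median M Y \<le> m"
    by (intro lower_median_le[OF Y]) simp
qed

end

text \<open>For a nondecreasing function the second clause is left-continuity on \<open>]0,1]\<close>.\<close>
definition mono_left_cont :: "(real \<Rightarrow> real) \<Rightarrow> bool" where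
  "mono_left_cont f \<longleftrightarrow>
     (\<forall>\<alpha> \<beta>. 0 < \<alpha> \<longrightarrow> \<alpha> \<le> \<beta> \<longrightarrow> \<beta> \<le> 1 \<longrightarrow> f \<alpha> \<le> f \<beta>) \<and>
     (\<forall>\<alpha>\<in>{0<..1}. \<forall>c. (\<forall>\<beta>\<in>{0<..<\<alpha>}. f \<beta> \<le> c) \<longrightarrow> f \<alpha> \<le> c)"

lemma mono_left_contI:
  assumes "\<And>\<alpha> \<beta>. 0 < \<alpha> \<Longrightarrow> \<alpha> \<le> \<beta> \<Longrightarrow> \<beta> \<le> 1 \<Longrightarrow> f \<alpha> \<le> f \<beta>"
    and "\<And>\<alpha> c. \<alpha> \<in> {0<..1} \<Longrightarrow> (\<And>\<beta>. \<beta> \<in> {0<..<\<alpha>} \<Longrightarrow> f \<beta> \<le> c) \<Longrightarrow> f \<alpha> \<le> c"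
  shows "mono_left_cont f"
  using assms unfolding mono_left_cont_def by blast

lemma mono_left_cont_mono:
  "mono_left_cont f \<Longrightarrow> 0 < \<alpha> \<Longrightarrow> \<alpha> \<le> \<beta> \<Longrightarrow> \<beta> \<le> 1 \<Longrightarrow> f \<alpha> \<le> f \<beta>"
  unfolding mono_left_cont_def by blast

lemma mono_left_cont_le:
  "mono_left_cont f \<Longrightarrow> \<alpha> \<in> {0<..1} \<Longrightarrow> (\<And>\<beta>. \<beta> \<in> {0<..<\<alpha>} \<Longrightarrow> f \<beta> \<le> c) \<Longrightarrow> f \<alpha> \<le> c"
  unfolding mono_left_cont_def by blast

context prob_space
begin

lemma prob_INT_antimono_ge:
  fixes E :: "real \<Rightarrow> 'a set"
  assumes "a < b"
    and events: "\<And>\<beta>. \<beta> \<in> {a<..<b} \<Longrightarrow> E \<beta> \<in> events"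
    and antimono: "\<And>\<beta> \<gamma>. a < \<beta> \<Longrightarrow> \<beta> \<le> \<gamma> \<Longrightarrow> \<gamma> < b \<Longrightarrow> E \<gamma> \<subseteq> E \<beta>"
    and ge: "\<And>\<beta>. \<beta> \<in> {a<..<b} \<Longrightarrow> c \<le> prob (E \<beta>)"
  shows "c \<le> prob (\<Inter>\<beta>\<in>{a<..<b}. E \<beta>)"
proof -
  define s where "s n = b - (b - a) / (real n + 2)" for n :: nat
  have s: "s n \<in> {a<..<b}" for n
    using \<open>a < b\<close> mult_right_mono[of a b "real n"] by (auto simp: s_def field_simps)
  have "s n \<le> s (Suc n)" for n
    using \<open>a < b\<close> by (auto simp: s_def intro!: divide_left_mono)
  then have "c \<le> prob (\<Inter>n. E (s n))"
    using s by (intro prob_INT_decseq_ge events ge decseq_SucI antimono) auto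
  moreover have "(\<Inter>n. E (s n)) \<subseteq> E \<beta>" if \<beta>: "\<beta> \<in> {a<..<b}" for \<beta>
  proof -
    obtain n where "(b - a) / (b - \<beta>) < real n"
      using reals_Archimedean2 by blast
    then have "\<beta> \<le> s n"
      using \<beta> by (simp add: s_def field_simps)
    then show ?thesis
      using antimono[of \<beta> "s n"] s[of n] \<beta> by auto
  qed
  then have "(\<Inter>n. E (s n)) = (\<Inter>\<beta>\<in>{a<..<b}. E \<beta>)"
    using s by blast
  ultimately show ?thesis
    by simp
qed

lemma prob_INT_mono_ge:
  fixes E :: "real \<Rightarrow> 'a set"
  assumes "a < b"
    and events: "\<And>\<beta>. \<beta> \<in> {a<..<b} \<Longrightarrow> E \<beta> \<in> events"
    and mono: "\<And>\<beta> \<gamma>. a < \<beta> \<Longrightarrow> \<beta> \<le> \<gamma> \<Longrightarrow> \<gamma> < b \<Longrightarrow> E \<beta> \<subseteq> E \<gamma>"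
    and ge: "\<And>\<beta>. \<beta> \<in> {a<..<b} \<Longrightarrow> c \<le> prob (E \<beta>)"
  shows "c \<le> prob (\<Inter>\<beta>\<in>{a<..<b}. E \<beta>)"
proof -
  have "c \<le> prob (\<Inter>\<beta>\<in>{-b<..<-a}. E (- \<beta>))"
    using assms by (intro prob_INT_antimono_ge) auto
  also have "(\<Inter>\<beta>\<in>{-b<..<-a}. E (- \<beta>)) = (\<Inter>\<beta>\<in>{a<..<b}. E \<beta>)"
    by (auto simp: minus_less_iff less_minus_iff intro: INT_I dest!: INT_D[of _ _ _ "- _"])
  finally show ?thesis .
qed

lemma lower_median_left_cont:
  fixes Y :: "real \<Rightarrow> 'a \<Rightarrow> real"
  assumes \<alpha>: "\<alpha> \<in> {0<..1}"
    and meas: "\<And>\<beta>. \<beta> \<in> {0<..1} \<Longrightarrow> Y \<beta> \<in> borel_measurable M"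
    and pointwise: "\<And>\<omega>. \<omega> \<in> space M \<Longrightarrow> mono_left_cont (\<lambda>\<beta>. Y \<beta> \<omega>)"
    and below: "\<And>\<beta>. \<beta> \<in> {0<..<\<alpha>} \<Longrightarrow> lower_median M (Y \<beta>) \<le> c"
  shows "lower_median M (Y \<alpha>) \<le> c"
proof -
  have events: "{\<omega>\<in>space M. Y \<beta> \<omega> \<le> c} \<in> events" if "\<beta> \<in> {0<..1}" for \<beta>
    using that by (intro borel_measurable_le meas measurable_const) auto
  have "1/2 \<le> prob (\<Inter>\<beta>\<in>{0<..<\<alpha>}. {\<omega>\<in>space M. Y \<beta> \<omega> \<le> c})"
  proof (rule prob_INT_antimono_ge)
    show "{\<omega>\<in>space M. Y \<gamma> \<omega> \<le> c} \<subseteq> {\<omega>\<in>space M. Y \<beta> \<omega> \<le> c}"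
      if "0 < \<beta>" "\<beta> \<le> \<gamma>" "\<gamma> < \<alpha>" for \<beta> \<gamma>
    proof -
      have "Y \<beta> \<omega> \<le> Y \<gamma> \<omega>" if "\<omega> \<in> space M" for \<omega>
        using \<open>0 < \<beta>\<close> \<open>\<beta> \<le> \<gamma>\<close> \<open>\<gamma> < \<alpha>\<close> \<alpha> pointwise[OF that]
        by (intro mono_left_cont_mono[where f="\<lambda>\<beta>. Y \<beta> \<omega>"]) auto
      then show ?thesis
        by (auto intro: order_trans)
    qed
  qed (use \<alpha> events meas below lower_median_le_iff in auto)
  also have "\<dots> \<le> prob {\<omega>\<in>space M. Y \<alpha> \<omega> \<le> c}"
  proof (rule finite_measure_mono)
    show "(\<Inter>\<beta>\<in>{0<..<\<alpha>}. {\<omega>\<in>space M. Y \<beta> \<omega> \<le> c}) \<subseteq> {\<omega>\<in>space M. Y \<alpha> \<omega> \<le> c}"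
    proof
      fix \<omega> assume \<omega>: "\<omega> \<in> (\<Inter>\<beta>\<in>{0<..<\<alpha>}. {\<omega>\<in>space M. Y \<beta> \<omega> \<le> c})"
      moreover have "\<alpha> / 2 \<in> {0<..<\<alpha>}"
        using \<alpha> by simp
      ultimately have "\<omega> \<in> space M"
        by blast
      with \<omega> \<alpha> show "\<omega> \<in> {\<omega>\<in>space M. Y \<alpha> \<omega> \<le> c}"
        by (auto intro: mono_left_cont_le[OF pointwise])
    qed
  qed (use \<alpha> events in auto)
  finally show ?thesis
    using \<alpha> meas lower_median_le_iff by auto
qed

lemma mono_left_cont_lower_median:
  fixes Y :: "real \<Rightarrow> 'a \<Rightarrow> real"
  assumes meas: "\<And>\<beta>. \<beta> \<in> {0<..1} \<Longrightarrow> Y \<beta> \<in> borel_measurable M"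
    and pointwise: "\<And>\<omega>. \<omega> \<in> space M \<Longrightarrow> mono_left_cont (\<lambda>\<beta>. Y \<beta> \<omega>)"
  shows "mono_left_cont (\<lambda>\<beta>. lower_median M (Y \<beta>))"
proof (rule mono_left_contI)
  fix \<alpha> \<beta> :: real assume "0 < \<alpha>" "\<alpha> \<le> \<beta>" "\<beta> \<le> 1"
  then show "lower_median M (Y \<alpha>) \<le> lower_median M (Y \<beta>)"
    using pointwise by (intro lower_median_mono meas) (auto dest: mono_left_cont_mono)
qed (rule lower_median_left_cont[OF _ meas pointwise])

lemma half_le_prob_ge_if_le_lower_medians:
  fixes Y :: "real \<Rightarrow> 'a \<Rightarrow> real"
  assumes meas: "\<And>\<beta>. \<beta> \<in> {0..1} \<Longrightarrow> Y \<beta> \<in> borel_measurable M"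
    and mono: "\<And>\<omega> \<beta> \<gamma>. \<omega> \<in> space M \<Longrightarrow> 0 \<le> \<beta> \<Longrightarrow> \<beta> \<le> \<gamma> \<Longrightarrow> \<gamma> \<le> 1 \<Longrightarrow> Y \<beta> \<omega> \<le> Y \<gamma> \<omega>"
    and greatest: "\<And>\<omega> c. \<omega> \<in> space M \<Longrightarrow> (\<And>\<beta>. \<beta> \<in> {0<..1} \<Longrightarrow> c \<le> Y \<beta> \<omega>) \<Longrightarrow> c \<le> Y 0 \<omega>"
    and le: "\<And>\<beta>. \<beta> \<in> {0<..1} \<Longrightarrow> c \<le> lower_median M (Y \<beta>)"
  shows "1/2 \<le> prob {\<omega>\<in>space M. c \<le> Y 0 \<omega>}"
proof -
  have "1/2 \<le> prob (\<Inter>\<beta>\<in>{0<..<1}. {\<omega>\<in>space M. c \<le> Y \<beta> \<omega>})"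
  proof (rule prob_INT_mono_ge)
    show "{\<omega>\<in>space M. c \<le> Y \<beta> \<omega>} \<subseteq> {\<omega>\<in>space M. c \<le> Y \<gamma> \<omega>}"
      if "0 < \<beta>" "\<beta> \<le> \<gamma>" "\<gamma> < 1" for \<beta> \<gamma>
      using that mono[of _ \<beta> \<gamma>] by (auto intro: order_trans)
  qed (use meas le half_le_prob_ge_if_le_lower_median
      in \<open>auto intro: borel_measurable_le measurable_const\<close>)
  also have "\<dots> \<le> prob {\<omega>\<in>space M. c \<le> Y 0 \<omega>}"
  proof (rule finite_measure_mono)
    show "(\<Inter>\<beta>\<in>{0<..<1}. {\<omega>\<in>space M. c \<le> Y \<beta> \<omega>}) \<subseteq> {\<omega>\<in>space M. c \<le> Y 0 \<omega>}"
    proof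
      fix \<omega> assume \<omega>: "\<omega> \<in> (\<Inter>\<beta>\<in>{0<..<1}. {\<omega>\<in>space M. c \<le> Y \<beta> \<omega>})"
      moreover have "1/2 \<in> {0<..<1::real}"
        by simp
      ultimately have "\<omega> \<in> space M"
        by blast
      moreover have "c \<le> Y \<beta> \<omega>" if "\<beta> \<in> {0<..1}" for \<beta>
      proof -
        have "\<beta> / 2 \<in> {0<..<1}"
          using that by simp
        then have "c \<le> Y (\<beta> / 2) \<omega>"
          using \<omega> by blast
        also have "\<dots> \<le> Y \<beta> \<omega>"
          using that \<open>\<omega> \<in> space M\<close> by (intro mono) auto
        finally show ?thesis .
      qed
      ultimately show "\<omega> \<in> {\<omega>\<in>space M. c \<le> Y 0 \<omega>}"
        using greatest[of \<omega> c] by auto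
    qed
  qed (use meas in \<open>auto intro: borel_measurable_le measurable_const\<close>)
  finally show ?thesis .
qed

lemma INF_lower_median_in_Med:
  fixes Y :: "real \<Rightarrow> 'a \<Rightarrow> real"
  assumes meas: "\<And>\<beta>. \<beta> \<in> {0..1} \<Longrightarrow> Y \<beta> \<in> borel_measurable M"
    and mono: "\<And>\<omega> \<beta> \<gamma>. \<omega> \<in> space M \<Longrightarrow> 0 \<le> \<beta> \<Longrightarrow> \<beta> \<le> \<gamma> \<Longrightarrow> \<gamma> \<le> 1 \<Longrightarrow> Y \<beta> \<omega> \<le> Y \<gamma> \<omega>"
    and greatest: "\<And>\<omega> c. \<omega> \<in> space M \<Longrightarrow> (\<And>\<beta>. \<beta> \<in> {0<..1} \<Longrightarrow> c \<le> Y \<beta> \<omega>) \<Longrightarrow> c \<le> Y 0 \<omega>"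
  shows "(INF \<beta>\<in>{0<..1}. lower_median M (Y \<beta>)) \<in> Med M (Y 0)"
proof -
  define L where "L = (INF \<beta>\<in>{0<..1}. lower_median M (Y \<beta>))"
  have lower_median_0_le: "lower_median M (Y 0) \<le> lower_median M (Y \<beta>)" if "\<beta> \<in> {0<..1}" for \<beta>
    using that mono by (intro lower_median_mono meas) auto
  then have "lower_median M (Y 0) \<le> L"
    unfolding L_def by (intro cINF_greatest) auto
  then have "1/2 \<le> prob {\<omega>\<in>space M. Y 0 \<omega> \<le> L}"
    using meas lower_median_le_iff by auto
  moreover have "1/2 \<le> prob {\<omega>\<in>space M. L \<le> Y 0 \<omega>}"
  proof (rule half_le_prob_ge_if_le_lower_medians[where Y=Y, OF meas mono greatest])
    show "L \<le> lower_median M (Y \<beta>)" if "\<beta> \<in> {0<..1}" for \<beta>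
      unfolding L_def using that lower_median_0_le by (intro cINF_lower bdd_belowI2) auto
  qed auto
  ultimately show ?thesis
    unfolding Med_def L_def by simp
qed

end

section \<open>Endpoints of \<open>\<alpha>\<close>-levels\<close>

definition level_inf :: "(real \<Rightarrow> real) \<Rightarrow> real \<Rightarrow> real" where
  "level_inf A \<alpha> = Inf (alpha_level A \<alpha>)"

definition level_sup :: "(real \<Rightarrow> real) \<Rightarrow> real \<Rightarrow> real" where
  "level_sup A \<alpha> = Sup (alpha_level A \<alpha>)"

lemma supp_fun_one: "supp_fun A 1 \<alpha> = level_sup A \<alpha>"
  unfolding supp_fun_def level_sup_def by simp

lemma supp_fun_minus_one: "supp_fun A (-1) \<alpha> = - level_inf A \<alpha>"
  unfolding supp_fun_def level_inf_def Inf_real_def by simp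

lemma alpha_level_Fc:
  assumes "A \<in> Fc" "\<alpha> \<in> {0..1}"
  shows "alpha_level A \<alpha> = {level_inf A \<alpha>..level_sup A \<alpha>}"
    and "level_inf A \<alpha> \<le> level_sup A \<alpha>"
proof -
  obtain a b where "a \<le> b" "alpha_level A \<alpha> = {a..b}"
    using assms unfolding Fc_def by blast
  then show "alpha_level A \<alpha> = {level_inf A \<alpha>..level_sup A \<alpha>}" "level_inf A \<alpha> \<le> level_sup A \<alpha>"
    unfolding level_inf_def level_sup_def by auto
qed

lemma alpha_level_pos: "0 < \<alpha> \<Longrightarrow> alpha_level A \<alpha> = {x. \<alpha> \<le> A x}"
  unfolding alpha_level_def by simp

lemma alpha_level_antimono:
  assumes "0 \<le> \<alpha>" "\<alpha> \<le> \<beta>"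
  shows "alpha_level A \<beta> \<subseteq> alpha_level A \<alpha>"
proof (cases "\<alpha> = 0 \<and> \<beta> \<noteq> 0")
  case True
  then have "alpha_level A \<beta> \<subseteq> {x. 0 < A x}"
    using assms by (auto simp: alpha_level_pos)
  also have "\<dots> \<subseteq> alpha_level A \<alpha>"
    using True closure_subset[of "{x. 0 < A x}"] by (simp add: alpha_level_def)
  finally show ?thesis .
qed (use assms in \<open>auto simp: alpha_level_def\<close>)

lemma alpha_level_left_cont:
  assumes "0 < \<alpha>" and below: "\<And>\<beta>. \<beta> \<in> {0<..<\<alpha>} \<Longrightarrow> x \<in> alpha_level A \<beta>"
  shows "x \<in> alpha_level A \<alpha>"
proof -
  have "\<alpha> \<le> A x"
    using below by (intro dense_le_bounded[OF \<open>0 < \<alpha>\<close>]) (auto simp: alpha_level_pos)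
  then show ?thesis
    using \<open>0 < \<alpha>\<close> by (simp add: alpha_level_pos)
qed

lemma alpha_level_0_eq_closure:
  assumes "\<And>x. A x \<le> 1"
  shows "alpha_level A 0 = closure (\<Union>\<beta>\<in>{0<..1}. alpha_level A \<beta>)"
proof -
  have "{x. 0 < A x} = (\<Union>\<beta>\<in>{0<..1}. alpha_level A \<beta>)"
    using assms by (force simp: alpha_level_pos)
  then show ?thesis
    by (simp add: alpha_level_def)
qed

context
  fixes A :: "real \<Rightarrow> real"
  assumes A: "A \<in> Fc"
begin

lemma level_inf_mono: "0 \<le> \<alpha> \<Longrightarrow> \<alpha> \<le> \<beta> \<Longrightarrow> \<beta> \<le> 1 \<Longrightarrow> level_inf A \<alpha> \<le> level_inf A \<beta>"
  and level_sup_antimono: "0 \<le> \<alpha> \<Longrightarrow> \<alpha> \<le> \<beta> \<Longrightarrow> \<beta> \<le> 1 \<Longrightarrow> level_sup A \<beta> \<le> level_sup A \<alpha>"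
  using alpha_level_antimono[of \<alpha> \<beta> A] alpha_level_Fc[OF A, of \<alpha>] alpha_level_Fc[OF A, of \<beta>]
  by auto

lemma mono_left_cont_level_inf: "mono_left_cont (level_inf A)"
proof (rule mono_left_contI)
  fix \<alpha> c assume \<alpha>: "\<alpha> \<in> {0<..1}" and below: "\<And>\<beta>. \<beta> \<in> {0<..<\<alpha>} \<Longrightarrow> level_inf A \<beta> \<le> c"
  have "min c (level_sup A \<alpha>) \<in> alpha_level A \<alpha>"
  proof (rule alpha_level_left_cont)
    fix \<beta> assume \<beta>: "\<beta> \<in> {0<..<\<alpha>}"
    then show "min c (level_sup A \<alpha>) \<in> alpha_level A \<beta>"
      using \<alpha> below[OF \<beta>] level_inf_mono[of \<beta> \<alpha>] level_sup_antimono[of \<beta> \<alpha>]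
        alpha_level_Fc[OF A, of \<alpha>] alpha_level_Fc[OF A, of \<beta>]
      by auto
  qed (use \<alpha> in auto)
  then show "level_inf A \<alpha> \<le> c"
    using \<alpha> alpha_level_Fc[OF A, of \<alpha>] by auto
qed (auto intro: level_inf_mono)

lemma mono_left_cont_uminus_level_sup: "mono_left_cont (\<lambda>\<alpha>. - level_sup A \<alpha>)"
proof (rule mono_left_contI)
  fix \<alpha> c assume \<alpha>: "\<alpha> \<in> {0<..1}" and below: "\<And>\<beta>. \<beta> \<in> {0<..<\<alpha>} \<Longrightarrow> - level_sup A \<beta> \<le> c"
  have "max (- c) (level_inf A \<alpha>) \<in> alpha_level A \<alpha>"
  proof (rule alpha_level_left_cont)
    fix \<beta> assume \<beta>: "\<beta> \<in> {0<..<\<alpha>}"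
    then show "max (- c) (level_inf A \<alpha>) \<in> alpha_level A \<beta>"
      using \<alpha> below[OF \<beta>] level_inf_mono[of \<beta> \<alpha>] level_sup_antimono[of \<beta> \<alpha>]
        alpha_level_Fc[OF A, of \<alpha>] alpha_level_Fc[OF A, of \<beta>]
      by auto
  qed (use \<alpha> in auto)
  then show "- level_sup A \<alpha> \<le> c"
    using \<alpha> alpha_level_Fc[OF A, of \<alpha>] by auto
qed (auto intro: level_sup_antimono)

lemma alpha_level_0_subset:
  assumes "\<And>\<beta>. \<beta> \<in> {0<..1} \<Longrightarrow> alpha_level A \<beta> \<subseteq> S" "closed S"
  shows "alpha_level A 0 \<subseteq> S"
proof -
  have "\<And>x. A x \<le> 1"
    using A unfolding Fc_def by auto
  then have "alpha_level A 0 = closure (\<Union>\<beta>\<in>{0<..1}. alpha_level A \<beta>)"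
    by (rule alpha_level_0_eq_closure)
  also have "\<dots> \<subseteq> S"
    using assms by (intro closure_minimal) blast+
  finally show ?thesis .
qed

lemma level_inf_0_greatest:
  assumes "\<And>\<beta>. \<beta> \<in> {0<..1} \<Longrightarrow> c \<le> level_inf A \<beta>"
  shows "c \<le> level_inf A 0"
proof -
  have "alpha_level A 0 \<subseteq> {c..}"
    using assms alpha_level_Fc[OF A] by (intro alpha_level_0_subset) fastforce+
  then show ?thesis
    using alpha_level_Fc[OF A, of 0] by auto
qed

lemma level_sup_0_least:
  assumes "\<And>\<beta>. \<beta> \<in> {0<..1} \<Longrightarrow> level_sup A \<beta> \<le> c"
  shows "level_sup A 0 \<le> c"
proof -
  have "alpha_level A 0 \<subseteq> {..c}"
    using assms alpha_level_Fc[OF A] by (intro alpha_level_0_subset) fastforce+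
  then show ?thesis
    using alpha_level_Fc[OF A, of 0] by auto
qed

end

context
  fixes M :: "'a measure" and X :: "'a \<Rightarrow> real \<Rightarrow> real"
  assumes X: "fuzzy_random_variable M X"
begin

lemma borel_measurable_level_inf:
  assumes "\<alpha> \<in> {0..1}"
  shows "(\<lambda>\<omega>. level_inf (X \<omega>) \<alpha>) \<in> borel_measurable M"
  unfolding borel_measurable_iff_less
proof
  fix c
  have "{\<omega>\<in>space M. level_inf (X \<omega>) \<alpha> < c} = {\<omega>\<in>space M. alpha_level (X \<omega>) \<alpha> \<inter> {..<c} \<noteq> {}}"
    using X alpha_level_Fc[OF _ assms] unfolding fuzzy_random_variable_def by (auto; fastforce)
  also have "\<dots> \<in> sets M"
    using X assms unfolding fuzzy_random_variable_def random_compact_set_def by auto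
  finally show "{\<omega>\<in>space M. level_inf (X \<omega>) \<alpha> < c} \<in> sets M" .
qed

lemma borel_measurable_level_sup:
  assumes "\<alpha> \<in> {0..1}"
  shows "(\<lambda>\<omega>. level_sup (X \<omega>) \<alpha>) \<in> borel_measurable M"
  unfolding borel_measurable_iff_greater
proof
  fix c
  have "{\<omega>\<in>space M. c < level_sup (X \<omega>) \<alpha>} = {\<omega>\<in>space M. alpha_level (X \<omega>) \<alpha> \<inter> {c<..} \<noteq> {}}"
    using X alpha_level_Fc[OF _ assms] unfolding fuzzy_random_variable_def by (auto; fastforce)
  also have "\<dots> \<in> sets M"
    using X assms unfolding fuzzy_random_variable_def random_compact_set_def by auto
  finally show "{\<omega>\<in>space M. c < level_sup (X \<omega>) \<alpha>} \<in> sets M" .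
qed

end


section \<open>Fuzzy sets with prescribed \<open>\<alpha>\<close>-levels\<close>

lemma closure_eq_atLeastAtMost:
  fixes S :: "real set"
  assumes "{a<..<b} \<subseteq> S" "S \<subseteq> {a..b}" "S \<noteq> {}"
  shows "closure S = {a..b}"
proof (cases "a < b")
  case True
  have "closure S \<subseteq> {a..b}"
    using assms(2) by (intro closure_minimal) auto
  moreover have "{a..b} \<subseteq> closure S"
    using closure_mono[OF assms(1)] True by simp
  ultimately show ?thesis by blast
next
  case False
  with assms(2,3) have "a = b"
    by fastforce
  with assms(2,3) have "S = {a}"
    by auto
  then show ?thesis
    using \<open>a = b\<close> by simp
qed

definition fuzzy_of_levels :: "(real \<Rightarrow> real) \<Rightarrow> (real \<Rightarrow> real) \<Rightarrow> real \<Rightarrow> real" where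
  "fuzzy_of_levels l r x = Sup (insert 0 {\<alpha>\<in>{0<..1}. x \<in> {l \<alpha>..r \<alpha>}})"

locale nested_level_intervals =
  fixes l r :: "real \<Rightarrow> real"
  assumes mono_left_cont_l: "mono_left_cont l"
    and mono_left_cont_uminus_r: "mono_left_cont (\<lambda>\<alpha>. - r \<alpha>)"
    and l_le_r: "\<And>\<alpha>. \<alpha> \<in> {0<..1} \<Longrightarrow> l \<alpha> \<le> r \<alpha>"
    and bdd_below_l: "bdd_below (l ` {0<..1})"
    and bdd_above_r: "bdd_above (r ` {0<..1})"
begin

lemma l_mono: "0 < \<beta> \<Longrightarrow> \<beta> \<le> \<gamma> \<Longrightarrow> \<gamma> \<le> 1 \<Longrightarrow> l \<beta> \<le> l \<gamma>"
  and r_antimono: "0 < \<beta> \<Longrightarrow> \<beta> \<le> \<gamma> \<Longrightarrow> \<gamma> \<le> 1 \<Longrightarrow> r \<gamma> \<le> r \<beta>"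
  using mono_left_cont_mono[OF mono_left_cont_l, of \<beta> \<gamma>]
    mono_left_cont_mono[OF mono_left_cont_uminus_r, of \<beta> \<gamma>]
  by auto

lemma fuzzy_of_levels_bounds: "0 \<le> fuzzy_of_levels l r x \<and> fuzzy_of_levels l r x \<le> 1"
proof -
  let ?S = "insert 0 {\<alpha>\<in>{0<..1}. x \<in> {l \<alpha>..r \<alpha>}}"
  have "bdd_above ?S"
    by (rule bdd_aboveI[of _ 1]) auto
  then have "0 \<le> Sup ?S"
    by (rule cSup_upper[rotated]) simp
  moreover have "Sup ?S \<le> 1"
    by (rule cSup_least) auto
  ultimately show ?thesis
    unfolding fuzzy_of_levels_def by simp
qed

lemma le_fuzzy_of_levels_iff:
  assumes \<alpha>: "\<alpha> \<in> {0<..1}"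
  shows "\<alpha> \<le> fuzzy_of_levels l r x \<longleftrightarrow> x \<in> {l \<alpha>..r \<alpha>}"
proof
  assume "x \<in> {l \<alpha>..r \<alpha>}"
  then show "\<alpha> \<le> fuzzy_of_levels l r x"
    using \<alpha> unfolding fuzzy_of_levels_def by (intro cSup_upper) (auto intro: bdd_aboveI[of _ 1])
next
  assume le: "\<alpha> \<le> fuzzy_of_levels l r x"
  have below: "x \<in> {l \<beta>..r \<beta>}" if \<beta>: "\<beta> \<in> {0<..<\<alpha>}" for \<beta>
  proof -
    have "\<beta> < Sup (insert 0 {\<gamma>\<in>{0<..1}. x \<in> {l \<gamma>..r \<gamma>}})"
      using le \<beta> unfolding fuzzy_of_levels_def by auto
    then obtain \<gamma> where "\<gamma> \<in> {0<..1}" "x \<in> {l \<gamma>..r \<gamma>}" "\<beta> < \<gamma>"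
      using \<beta> by (subst (asm) less_cSup_iff) (auto intro: bdd_aboveI[of _ 1])
    then show ?thesis
      using l_mono[of \<beta> \<gamma>] r_antimono[of \<beta> \<gamma>] \<beta> by auto
  qed
  then have "l \<alpha> \<le> x"
    by (intro mono_left_cont_le[OF mono_left_cont_l \<alpha>]) auto
  moreover from below have "- r \<alpha> \<le> - x"
    by (intro mono_left_cont_le[OF mono_left_cont_uminus_r \<alpha>]) auto
  ultimately show "x \<in> {l \<alpha>..r \<alpha>}"
    by simp
qed

lemma alpha_level_fuzzy_of_levels:
  "\<alpha> \<in> {0<..1} \<Longrightarrow> alpha_level (fuzzy_of_levels l r) \<alpha> = {l \<alpha>..r \<alpha>}"
  by (auto simp: alpha_level_pos le_fuzzy_of_levels_iff)

lemma alpha_level_0_fuzzy_of_levels: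
  "alpha_level (fuzzy_of_levels l r) 0 = {Inf (l ` {0<..1})..Sup (r ` {0<..1})}"
proof -
  let ?L = "Inf (l ` {0<..1})" and ?R = "Sup (r ` {0<..1})"
  have "alpha_level (fuzzy_of_levels l r) 0 = closure (\<Union>\<alpha>\<in>{0<..1}. {l \<alpha>..r \<alpha>})"
    using fuzzy_of_levels_bounds alpha_level_fuzzy_of_levels
    by (simp add: alpha_level_0_eq_closure)
  also have "\<dots> = {?L..?R}"
  proof (rule closure_eq_atLeastAtMost)
    show "{?L<..<?R} \<subseteq> (\<Union>\<alpha>\<in>{0<..1}. {l \<alpha>..r \<alpha>})"
    proof
      fix x assume x: "x \<in> {?L<..<?R}"
      then obtain \<beta> \<gamma> where "\<beta> \<in> {0<..1}" "l \<beta> < x" "\<gamma> \<in> {0<..1}" "x < r \<gamma>"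
        using bdd_below_l bdd_above_r by (auto simp: cInf_less_iff less_cSup_iff)
      then show "x \<in> (\<Union>\<alpha>\<in>{0<..1}. {l \<alpha>..r \<alpha>})"
        using l_mono[of "min \<beta> \<gamma>" \<beta>] r_antimono[of "min \<beta> \<gamma>" \<gamma>]
        by (intro UN_I[of "min \<beta> \<gamma>"]) auto
    qed
    show "(\<Union>\<alpha>\<in>{0<..1}. {l \<alpha>..r \<alpha>}) \<subseteq> {?L..?R}"
    proof (rule UN_least)
      fix \<alpha> :: real assume "\<alpha> \<in> {0<..1}"
      then have "?L \<le> l \<alpha>" "r \<alpha> \<le> ?R"
        using bdd_below_l bdd_above_r by (auto intro: cINF_lower cSUP_upper)
      then show "{l \<alpha>..r \<alpha>} \<subseteq> {?L..?R}"
        by auto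
    qed
    show "(\<Union>\<alpha>\<in>{0<..1}. {l \<alpha>..r \<alpha>}) \<noteq> {}"
      using l_le_r[of 1] by auto
  qed
  finally show ?thesis .
qed

lemma INF_l_le_SUP_r: "Inf (l ` {0<..1}) \<le> Sup (r ` {0<..1})"
proof -
  have "Inf (l ` {0<..1}) \<le> l 1" "r 1 \<le> Sup (r ` {0<..1})"
    using bdd_below_l bdd_above_r by (auto intro: cINF_lower cSUP_upper)
  then show ?thesis
    using l_le_r[of 1] by simp
qed

lemma level_inf_fuzzy_of_levels: "\<alpha> \<in> {0<..1} \<Longrightarrow> level_inf (fuzzy_of_levels l r) \<alpha> = l \<alpha>"
  and level_sup_fuzzy_of_levels: "\<alpha> \<in> {0<..1} \<Longrightarrow> level_sup (fuzzy_of_levels l r) \<alpha> = r \<alpha>"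
  by (simp_all add: level_inf_def level_sup_def alpha_level_fuzzy_of_levels l_le_r)

lemma level_inf_0_fuzzy_of_levels: "level_inf (fuzzy_of_levels l r) 0 = Inf (l ` {0<..1})"
  and level_sup_0_fuzzy_of_levels: "level_sup (fuzzy_of_levels l r) 0 = Sup (r ` {0<..1})"
  by (simp_all add: level_inf_def level_sup_def alpha_level_0_fuzzy_of_levels INF_l_le_SUP_r)

lemma fuzzy_of_levels_in_Fc: "fuzzy_of_levels l r \<in> Fc"
  unfolding Fc_def
proof (intro CollectI conjI allI ballI)
  fix \<alpha> :: real assume "\<alpha> \<in> {0..1}"
  then consider "\<alpha> = 0" | "\<alpha> \<in> {0<..1}"
    by fastforce
  then show "\<exists>a b. a \<le> b \<and> alpha_level (fuzzy_of_levels l r) \<alpha> = {a..b}"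
  proof cases
    case 1
    then show ?thesis
      using INF_l_le_SUP_r by (auto simp: alpha_level_0_fuzzy_of_levels)
  next
    case 2
    then show ?thesis
      using l_le_r by (auto simp: alpha_level_fuzzy_of_levels)
  qed
qed (use fuzzy_of_levels_bounds in auto)

end


section \<open>A fuzzy median\<close>

definition median_level_inf :: "'a measure \<Rightarrow> ('a \<Rightarrow> real \<Rightarrow> real) \<Rightarrow> real \<Rightarrow> real" where
  "median_level_inf M X \<alpha> = lower_median M (\<lambda>\<omega>. level_inf (X \<omega>) \<alpha>)"

text \<open>The upper median of the right endpoint, written as a lower median so that both endpoints
  are covered by the left-continuity of lower medians.\<close>
definition median_level_sup :: "'a measure \<Rightarrow> ('a \<Rightarrow> real \<Rightarrow> real) \<Rightarrow> real \<Rightarrow> real" where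
  "median_level_sup M X \<alpha> = - lower_median M (\<lambda>\<omega>. - level_sup (X \<omega>) \<alpha>)"

definition fuzzy_median :: "'a measure \<Rightarrow> ('a \<Rightarrow> real \<Rightarrow> real) \<Rightarrow> real \<Rightarrow> real" where
  "fuzzy_median M X = fuzzy_of_levels (median_level_inf M X) (median_level_sup M X)"

context prob_space
begin

context
  fixes X :: "'a \<Rightarrow> real \<Rightarrow> real"
  assumes X: "fuzzy_random_variable M X"
begin

lemma fuzzy_random_variable_in_Fc: "\<omega> \<in> space M \<Longrightarrow> X \<omega> \<in> Fc"
  using X unfolding fuzzy_random_variable_def by blast

lemma borel_measurable_uminus_level_sup:
  "\<alpha> \<in> {0..1} \<Longrightarrow> (\<lambda>\<omega>. - level_sup (X \<omega>) \<alpha>) \<in> borel_measurable M"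
  by (intro borel_measurable_uminus borel_measurable_level_sup[OF X])

lemma median_level_inf_in_Med:
  "\<alpha> \<in> {0..1} \<Longrightarrow> median_level_inf M X \<alpha> \<in> Med M (\<lambda>\<omega>. level_inf (X \<omega>) \<alpha>)"
  unfolding median_level_inf_def by (intro lower_median_in_Med borel_measurable_level_inf[OF X])

lemma median_level_sup_in_Med:
  assumes "\<alpha> \<in> {0..1}"
  shows "median_level_sup M X \<alpha> \<in> Med M (\<lambda>\<omega>. level_sup (X \<omega>) \<alpha>)"
proof -
  have "- median_level_sup M X \<alpha> \<in> Med M (\<lambda>\<omega>. - level_sup (X \<omega>) \<alpha>)"
    unfolding median_level_sup_def minus_minus
    by (rule lower_median_in_Med[OF borel_measurable_uminus_level_sup[OF assms]])
  then show ?thesis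
    by (simp only: Med_uminus)
qed

lemma median_level_inf_le_median_level_sup:
  assumes \<alpha>: "\<alpha> \<in> {0..1}"
  shows "median_level_inf M X \<alpha> \<le> median_level_sup M X \<alpha>"
proof -
  have "median_level_inf M X \<alpha> \<le> lower_median M (\<lambda>\<omega>. level_sup (X \<omega>) \<alpha>)"
    unfolding median_level_inf_def
  proof (rule lower_median_mono)
    show "level_inf (X \<omega>) \<alpha> \<le> level_sup (X \<omega>) \<alpha>" if "\<omega> \<in> space M" for \<omega>
      using alpha_level_Fc(2)[OF fuzzy_random_variable_in_Fc[OF that] \<alpha>] .
  qed (use borel_measurable_level_inf[OF X \<alpha>] borel_measurable_level_sup[OF X \<alpha>] in auto)
  also have "\<dots> \<le> median_level_sup M X \<alpha>"
    using median_level_sup_in_Med[OF \<alpha>] unfolding Med_def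
    by (intro lower_median_le borel_measurable_level_sup[OF X \<alpha>]) simp
  finally show ?thesis .
qed

lemma nested_level_intervals_median:
  "nested_level_intervals (median_level_inf M X) (median_level_sup M X)"
proof
  show "mono_left_cont (median_level_inf M X)"
    unfolding median_level_inf_def
  proof (rule mono_left_cont_lower_median[where Y="\<lambda>\<alpha> \<omega>. level_inf (X \<omega>) \<alpha>"])
    show "(\<lambda>\<omega>. level_inf (X \<omega>) \<beta>) \<in> borel_measurable M" if "\<beta> \<in> {0<..1}" for \<beta>
      using that by (intro borel_measurable_level_inf[OF X]) auto
    show "mono_left_cont (\<lambda>\<beta>. level_inf (X \<omega>) \<beta>)" if "\<omega> \<in> space M" for \<omega>
      using mono_left_cont_level_inf[OF fuzzy_random_variable_in_Fc[OF that]] by simp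
  qed
  show "mono_left_cont (\<lambda>\<alpha>. - median_level_sup M X \<alpha>)"
    unfolding median_level_sup_def minus_minus
  proof (rule mono_left_cont_lower_median[where Y="\<lambda>\<alpha> \<omega>. - level_sup (X \<omega>) \<alpha>"])
    show "(\<lambda>\<omega>. - level_sup (X \<omega>) \<beta>) \<in> borel_measurable M" if "\<beta> \<in> {0<..1}" for \<beta>
      using that by (intro borel_measurable_uminus_level_sup) auto
    show "mono_left_cont (\<lambda>\<beta>. - level_sup (X \<omega>) \<beta>)" if "\<omega> \<in> space M" for \<omega>
      using mono_left_cont_uminus_level_sup[OF fuzzy_random_variable_in_Fc[OF that]] .
  qed
  show "median_level_inf M X \<alpha> \<le> median_level_sup M X \<alpha>" if "\<alpha> \<in> {0<..1}" for \<alpha>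
    using that by (intro median_level_inf_le_median_level_sup) auto
  have "median_level_inf M X 0 \<le> median_level_inf M X \<alpha>" if \<alpha>: "\<alpha> \<in> {0<..1}" for \<alpha>
    unfolding median_level_inf_def
  proof (rule lower_median_mono)
    show "level_inf (X \<omega>) 0 \<le> level_inf (X \<omega>) \<alpha>" if "\<omega> \<in> space M" for \<omega>
      using \<alpha> level_inf_mono[OF fuzzy_random_variable_in_Fc[OF that]] by simp
  qed (use \<alpha> in \<open>auto intro: borel_measurable_level_inf[OF X]\<close>)
  then show "bdd_below (median_level_inf M X ` {0<..1})"
    by (intro bdd_belowI2)
  have "median_level_sup M X \<alpha> \<le> median_level_sup M X 0" if \<alpha>: "\<alpha> \<in> {0<..1}" for \<alpha>
    unfolding median_level_sup_def neg_le_iff_le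
  proof (rule lower_median_mono)
    show "- level_sup (X \<omega>) 0 \<le> - level_sup (X \<omega>) \<alpha>" if "\<omega> \<in> space M" for \<omega>
      using \<alpha> level_sup_antimono[OF fuzzy_random_variable_in_Fc[OF that]] by simp
  qed (use \<alpha> in \<open>auto intro: borel_measurable_level_sup[OF X]\<close>)
  then show "bdd_above (median_level_sup M X ` {0<..1})"
    by (intro bdd_aboveI2)
qed

interpretation median: nested_level_intervals "median_level_inf M X" "median_level_sup M X"
  by (rule nested_level_intervals_median)

lemma level_inf_fuzzy_median:
  assumes \<alpha>: "\<alpha> \<in> {0..1}"
  shows "level_inf (fuzzy_median M X) \<alpha> \<in> Med M (\<lambda>\<omega>. level_inf (X \<omega>) \<alpha>)"
proof (cases "\<alpha> = 0")
  case True
  have "(INF \<beta>\<in>{0<..1}. median_level_inf M X \<beta>) \<in> Med M (\<lambda>\<omega>. level_inf (X \<omega>) 0)"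
    unfolding median_level_inf_def
  proof (rule INF_lower_median_in_Med[where Y="\<lambda>\<alpha> \<omega>. level_inf (X \<omega>) \<alpha>"])
    show "(\<lambda>\<omega>. level_inf (X \<omega>) \<beta>) \<in> borel_measurable M" if "\<beta> \<in> {0..1}" for \<beta>
      using that by (rule borel_measurable_level_inf[OF X])
    show "level_inf (X \<omega>) \<beta> \<le> level_inf (X \<omega>) \<gamma>"
      if "\<omega> \<in> space M" "0 \<le> \<beta>" "\<beta> \<le> \<gamma>" "\<gamma> \<le> 1" for \<omega> \<beta> \<gamma>
      using that level_inf_mono[OF fuzzy_random_variable_in_Fc] by blast
    show "c \<le> level_inf (X \<omega>) 0"
      if "\<omega> \<in> space M" "\<And>\<beta>. \<beta> \<in> {0<..1} \<Longrightarrow> c \<le> level_inf (X \<omega>) \<beta>" for \<omega> c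
      using that level_inf_0_greatest[OF fuzzy_random_variable_in_Fc] by blast
  qed
  then show ?thesis
    using True by (simp add: fuzzy_median_def median.level_inf_0_fuzzy_of_levels)
next
  case False
  then show ?thesis
    using \<alpha> median_level_inf_in_Med by (simp add: fuzzy_median_def median.level_inf_fuzzy_of_levels)
qed

lemma level_sup_fuzzy_median:
  assumes \<alpha>: "\<alpha> \<in> {0..1}"
  shows "level_sup (fuzzy_median M X) \<alpha> \<in> Med M (\<lambda>\<omega>. level_sup (X \<omega>) \<alpha>)"
proof (cases "\<alpha> = 0")
  case True
  have "(INF \<beta>\<in>{0<..1}. - median_level_sup M X \<beta>) \<in> Med M (\<lambda>\<omega>. - level_sup (X \<omega>) 0)"
    unfolding median_level_sup_def minus_minus
  proof (rule INF_lower_median_in_Med[where Y="\<lambda>\<alpha> \<omega>. - level_sup (X \<omega>) \<alpha>"])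
    show "(\<lambda>\<omega>. - level_sup (X \<omega>) \<beta>) \<in> borel_measurable M" if "\<beta> \<in> {0..1}" for \<beta>
      using that by (rule borel_measurable_uminus_level_sup)
    show "- level_sup (X \<omega>) \<beta> \<le> - level_sup (X \<omega>) \<gamma>"
      if "\<omega> \<in> space M" "0 \<le> \<beta>" "\<beta> \<le> \<gamma>" "\<gamma> \<le> 1" for \<omega> \<beta> \<gamma>
      using that level_sup_antimono[OF fuzzy_random_variable_in_Fc] by simp
    show "c \<le> - level_sup (X \<omega>) 0"
      if "\<omega> \<in> space M" "\<And>\<beta>. \<beta> \<in> {0<..1} \<Longrightarrow> c \<le> - level_sup (X \<omega>) \<beta>" for \<omega> c
      using that level_sup_0_least[OF fuzzy_random_variable_in_Fc, of \<omega> "- c"] by force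
  qed
  moreover have "(INF \<beta>\<in>{0<..1}. - median_level_sup M X \<beta>) = - Sup (median_level_sup M X ` {0<..1})"
    by (simp add: Inf_real_def image_image)
  ultimately show ?thesis
    using True by (simp add: fuzzy_median_def median.level_sup_0_fuzzy_of_levels Med_uminus)
next
  case False
  then show ?thesis
    using \<alpha> median_level_sup_in_Med by (simp add: fuzzy_median_def median.level_sup_fuzzy_of_levels)
qed

lemma fuzzy_median_in_Med_s: "fuzzy_median M X \<in> Med_s M X"
  unfolding Med_s_def
proof (intro CollectI conjI ballI)
  show "fuzzy_median M X \<in> Fc"
    unfolding fuzzy_median_def by (rule median.fuzzy_of_levels_in_Fc)
  fix u \<alpha> :: real assume "u \<in> {-1, 1}" "\<alpha> \<in> {0..1}"
  then show "supp_fun (fuzzy_median M X) u \<alpha> \<in> Med M (\<lambda>\<omega>. supp_fun (X \<omega>) u \<alpha>)"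
    using level_inf_fuzzy_median level_sup_fuzzy_median
    by (auto simp: supp_fun_one supp_fun_minus_one Med_uminus)
qed

end

end


section \<open>Fuzzy Tukey depth\<close>

lemma le_D_FT_iff:
  "c \<le> D_FT M X A \<longleftrightarrow> (\<forall>u\<in>{-1,1}. \<forall>\<alpha>\<in>{0..1}.
     c \<le> measure M {\<omega>\<in>space M. supp_fun (X \<omega>) u \<alpha> \<le> supp_fun A u \<alpha>} \<and>
     c \<le> measure M {\<omega>\<in>space M. supp_fun (X \<omega>) u \<alpha> \<ge> supp_fun A u \<alpha>})"
  unfolding D_FT_def by (subst le_cINF_iff) (auto intro: bdd_belowI2[of _ 0])

lemma Med_s_iff_half_le_D_FT: "A \<in> Fc \<Longrightarrow> A \<in> Med_s M X \<longleftrightarrow> 1/2 \<le> D_FT M X A"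
  unfolding Med_s_def Med_def le_D_FT_iff by auto

lemma Med_eq_if_gt_half:
  assumes "prob_space M" and m: "m \<in> Med M Y"
    and le: "1/2 < measure M {\<omega>\<in>space M. Y \<omega> \<le> a}"
    and ge: "1/2 < measure M {\<omega>\<in>space M. Y \<omega> \<ge> a}"
  shows "m = a"
proof (rule ccontr)
  interpret prob_space M by fact
  \<comment> \<open>\<open>Med\<close> and \<open>D_FT\<close> measure arbitrary sets, but only events have positive measure.\<close>
  have events: "E \<in> events" if "0 < prob E" for E
    using that measure_notin_sets[of E M] by fastforce
  have disjoint_le_1: "prob E + prob F \<le> 1" if "E \<inter> F = {}" "0 < prob E" "0 < prob F" for E F
    using that finite_measure_Union[of E F] prob_le_1[of "E \<union> F"] events by simp
  have m_le: "1/2 \<le> prob {\<omega>\<in>space M. Y \<omega> \<le> m}" and m_ge: "1/2 \<le> prob {\<omega>\<in>space M. Y \<omega> \<ge> m}"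
    using m unfolding Med_def by auto
  assume "m \<noteq> a"
  then consider "m < a" | "a < m"
    by linarith
  then show False
  proof cases
    case 1
    then have "prob {\<omega>\<in>space M. Y \<omega> \<le> m} + prob {\<omega>\<in>space M. Y \<omega> \<ge> a} \<le> 1"
      using m_le ge by (intro disjoint_le_1) auto
    with m_le ge show False
      by linarith
  next
    case 2
    then have "prob {\<omega>\<in>space M. Y \<omega> \<le> a} + prob {\<omega>\<in>space M. Y \<omega> \<ge> m} \<le> 1"
      using m_ge le by (intro disjoint_le_1) auto
    with m_ge le show False
      by linarith
  qed
qed

lemma D_FT_eq_if_gt_half:
  assumes "prob_space M" "A \<in> Med_s M X" "1/2 < D_FT M X U"
  shows "D_FT M X A = D_FT M X U"
proof -
  have "supp_fun A u \<alpha> = supp_fun U u \<alpha>" if "u \<in> {-1,1}" "\<alpha> \<in> {0..1}" for u \<alpha>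
  proof (rule Med_eq_if_gt_half[OF assms(1)])
    show "supp_fun A u \<alpha> \<in> Med M (\<lambda>\<omega>. supp_fun (X \<omega>) u \<alpha>)"
      using assms(2) that unfolding Med_s_def by blast
    have "D_FT M X U \<le> measure M {\<omega>\<in>space M. supp_fun (X \<omega>) u \<alpha> \<le> supp_fun U u \<alpha>}"
      "D_FT M X U \<le> measure M {\<omega>\<in>space M. supp_fun (X \<omega>) u \<alpha> \<ge> supp_fun U u \<alpha>}"
      using that le_D_FT_iff[of "D_FT M X U" M X U] by blast+
    with assms(3) show "1/2 < measure M {\<omega>\<in>space M. supp_fun (X \<omega>) u \<alpha> \<le> supp_fun U u \<alpha>}"
      "1/2 < measure M {\<omega>\<in>space M. supp_fun (X \<omega>) u \<alpha> \<ge> supp_fun U u \<alpha>}"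
      by linarith+
  qed
  then show ?thesis
    unfolding D_FT_def by (intro INF_cong) auto
qed

theorem theorem4p4:
  fixes M :: "'a measure" and X :: "'a \<Rightarrow> real \<Rightarrow> real"
  assumes "prob_space M"
    and "fuzzy_random_variable M X"
  shows "Med_s M X = Med_DFT M X"
proof -
  have "fuzzy_median M X \<in> Med_s M X"
    by (rule prob_space.fuzzy_median_in_Med_s[OF assms])
  then obtain B where "B \<in> Fc" "1/2 \<le> D_FT M X B"
    using Med_s_iff_half_le_D_FT unfolding Med_s_def by blast
  show ?thesis
  proof (intro set_eqI iffI)
    fix A assume A: "A \<in> Med_s M X"
    then have "1/2 \<le> D_FT M X A"
      using Med_s_iff_half_le_D_FT unfolding Med_s_def by blast
    then have "D_FT M X U \<le> D_FT M X A" for U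
      using D_FT_eq_if_gt_half[OF assms(1) A, of U] by fastforce
    then show "A \<in> Med_DFT M X"
      using A unfolding Med_s_def Med_DFT_def by blast
  next
    fix A assume "A \<in> Med_DFT M X"
    then show "A \<in> Med_s M X"
      using \<open>B \<in> Fc\<close> \<open>1/2 \<le> D_FT M X B\<close> Med_s_iff_half_le_D_FT
      unfolding Med_DFT_def by fastforce
  qed
qed

end
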